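(* Let $MPR_{lsd}\subset MPR$ be the subgroup spanned by the lsd permutation words (including the empty word). Then $MPR_{lsd}$ is a subcoalgebra of $(MPR,\mu)$, and the restriction $\pi''=\pi|_{MPR_{lsd}}:MPR_{lsd}\to QSymm$ is an isomorphism of coalgebras. Consequently $(\pi'')^{-1}:QSymm\to MPR_{lsd}\subset MPR$ is a coalgebra morphism with $\pi\circ(\pi'')^{-1}=\mathrm{id}_{QSymm}$, i.e. a coalgebra section of $\pi$.
   Context: A permutation word of length $n$ is a word $[s_1,\dots,s_n]$ over $\mathbf N$ in which each of $1,\dots,n$ occurs once; $S_n$ is the set of these. $\mathrm{desc}(\sigma)=\{i\in\{1,\dots,n-1\}:s_i>s_{i+1}\}$. $\sigma\in S_n$ is lsd if it is the lexicographically smallest element of $\{\tau\in S_n:\mathrm{desc}(\tau)=\mathrm{desc}(\sigma)\}$. For a word $\alpha$ over $\mathbf N$ without repeated letters, $\mathrm{st}(\alpha)$ relabels its letters by $1,\dots,\text{length}$ via the order-preserving bijection. $(MPR,m,\mu)$: free abelian group on all permutation words; $m([a_1,\dots,a_m]\otimes[b_1,\dots,b_n])=[a_1,\dots,a_m]\times_{sh}[m+b_1,\dots,m+b_n]$ (shuffle product); $\mu(\alpha)=\sum_{\alpha'*\alpha''=\alpha}\mathrm{st}(\alpha')\otimes\mathrm{st}(\alpha'')$ over all prefix/suffix cuts; counit $1$ on the empty word, $0$ elsewhere. A composition of $n$ is a word $[a_1,\dots,a_r]$ over $\mathbf N$ with sum $n$; for $D=\{d_1<\dots<d_{r-1}\}\subset\{1,\dots,n-1\}$,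 $\mathrm{comp}(D)=[d_1,d_2-d_1,\dots,n-d_{r-1}]$. $QSymm$ is the free abelian group on all compositions (words over $\mathbf N$, including the empty one), with comultiplication $\mu([a_1,\dots,a_m])=\sum_{i=0}^m[a_1,\dots,a_i]\otimes[a_{i+1},\dots,a_m]$, counit $1$ on the empty word and $0$ elsewhere (and the overlapping shuffle product as multiplication). For compositions, $\beta\ge\alpha$ means $\beta$ refines $\alpha$; $F_\alpha=\sum_{\beta\ge\alpha}\beta$; the $F_\alpha$ form a basis of $QSymm$. The map $\pi:(MPR,m,\mu)\to QSymm$, $\pi(\sigma)=F_{\mathrm{comp}(\mathrm{desc}(\sigma))}$, is a surjective Hopf algebra morphism (in particular a coalgebra morphism). *)

theory Defs
  imports Main
begin

definition perm_word :: "nat list \<Rightarrow> bool" where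
  "perm_word w \<longleftrightarrow> distinct w \<and> set w = {1..length w}"

text \<open>Descent set, positions 1-indexed: i in desc w iff s_i > s_(i+1).\<close>
definition desc :: "nat list \<Rightarrow> nat set" where
  "desc w = {i \<in> {1..<length w}. w ! (i - 1) > w ! i}"

definition lex_less :: "nat list \<Rightarrow> nat list \<Rightarrow> bool" where
  "lex_less u v \<longleftrightarrow> (u, v) \<in> lexord {(a, b). a < b}"

definition lsd :: "nat list \<Rightarrow> bool" where
  "lsd w \<longleftrightarrow> perm_word w \<and>
     (\<forall>t. perm_word t \<and> length t = length w \<and> desc t = desc w \<longrightarrow> w = t \<or> lex_less w t)"

definition st :: "nat list \<Rightarrow> nat list" where
  "st a = map (\<lambda>x. card {y \<in> set a. y \<le> x}) a"

definition composition :: "nat list \<Rightarrow> bool" where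
  "composition c \<longleftrightarrow> (\<forall>x \<in> set c. 0 < x)"

definition comp :: "nat \<Rightarrow> nat set \<Rightarrow> nat list" where
  "comp n D = (if n = 0 then [] else
     (let b = 0 # sorted_list_of_set D @ [n] in map (\<lambda>(x, y). y - x) (zip (butlast b) (tl b))))"

definition psums :: "nat list \<Rightarrow> nat set" where
  "psums c = {sum_list (take i c) | i. 0 < i \<and> i < length c}"

text \<open>refines b a : b refines a (written b \<ge> a in the paper).\<close>
definition refines :: "nat list \<Rightarrow> nat list \<Rightarrow> bool" where
  "refines b a \<longleftrightarrow> sum_list b = sum_list a \<and> psums a \<subseteq> psums b"

section \<open>Free abelian groups as finitely supported integer functions\<close>

definition supp :: "('a \<Rightarrow> int) \<Rightarrow> 'a set" where
  "supp x = {w. x w \<noteq> 0}"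

definition delta :: "'a \<Rightarrow> 'a \<Rightarrow> int" where
  "delta a = (\<lambda>w. if w = a then 1 else 0)"

definition lin :: "('a \<Rightarrow> 'b \<Rightarrow> int) \<Rightarrow> ('a \<Rightarrow> int) \<Rightarrow> 'b \<Rightarrow> int" where
  "lin F x = (\<lambda>v. \<Sum>w\<in>supp x. x w * F w v)"

text \<open>Tensor product of two group homomorphisms, applied to an element of the tensor
  square (a finitely supported function on pairs of basis elements).\<close>
definition tensor_map :: "(('a \<Rightarrow> int) \<Rightarrow> 'b \<Rightarrow> int) \<Rightarrow> (('a \<Rightarrow> int) \<Rightarrow> 'b \<Rightarrow> int)
    \<Rightarrow> ('a \<times> 'a \<Rightarrow> int) \<Rightarrow> 'b \<times> 'b \<Rightarrow> int" where
  "tensor_map g h t = (\<lambda>(u, v). \<Sum>ab\<in>supp t. t ab * g (delta (fst ab)) u * h (delta (snd ab)) v)"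

definition MPR :: "(nat list \<Rightarrow> int) set" where
  "MPR = {x. finite (supp x) \<and> supp x \<subseteq> {w. perm_word w}}"

definition MPR_lsd :: "(nat list \<Rightarrow> int) set" where
  "MPR_lsd = {x. finite (supp x) \<and> supp x \<subseteq> {w. lsd w}}"

definition QSymm :: "(nat list \<Rightarrow> int) set" where
  "QSymm = {x. finite (supp x) \<and> supp x \<subseteq> {c. composition c}}"

definition mu_MPR_basis :: "nat list \<Rightarrow> nat list \<times> nat list \<Rightarrow> int" where
  "mu_MPR_basis a = (\<lambda>(u, v). int (card {i \<in> {0..length a}. st (take i a) = u \<and> st (drop i a) = v}))"

definition mu_MPR :: "(nat list \<Rightarrow> int) \<Rightarrow> nat list \<times> nat list \<Rightarrow> int" where
  "mu_MPR = lin mu_MPR_basis"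

definition mu_Q_basis :: "nat list \<Rightarrow> nat list \<times> nat list \<Rightarrow> int" where
  "mu_Q_basis a = (\<lambda>(u, v). int (card {i \<in> {0..length a}. take i a = u \<and> drop i a = v}))"

definition mu_Q :: "(nat list \<Rightarrow> int) \<Rightarrow> nat list \<times> nat list \<Rightarrow> int" where
  "mu_Q = lin mu_Q_basis"

definition counit :: "(nat list \<Rightarrow> int) \<Rightarrow> int" where
  "counit x = x []"

definition F :: "nat list \<Rightarrow> nat list \<Rightarrow> int" where
  "F a = (\<lambda>b. if composition b \<and> refines b a then 1 else 0)"

definition pi_map :: "(nat list \<Rightarrow> int) \<Rightarrow> nat list \<Rightarrow> int" where
  "pi_map = lin (\<lambda>s. F (comp (length s) (desc s)))"

definition coalg_morphism :: "(nat list \<Rightarrow> int) set \<Rightarrow> ((nat list \<Rightarrow> int) \<Rightarrow> nat list \<times> nat list \<Rightarrow> int)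
    \<Rightarrow> ((nat list \<Rightarrow> int) \<Rightarrow> nat list \<times> nat list \<Rightarrow> int)
    \<Rightarrow> ((nat list \<Rightarrow> int) \<Rightarrow> nat list \<Rightarrow> int) \<Rightarrow> bool" where
  "coalg_morphism A muA muB g \<longleftrightarrow>
     (\<forall>x\<in>A. \<forall>y\<in>A. g (\<lambda>w. x w + y w) = (\<lambda>w. g x w + g y w)) \<and>
     (\<forall>x\<in>A. muB (g x) = tensor_map g g (muA x)) \<and>
     (\<forall>x\<in>A. counit (g x) = counit x)"

end

(* Call a permutation word split at its ascents if at every ascent all letters to the left are
   smaller than all letters to the right. For each descent set D there is such a word (cut 1..n at
   the ascents and write each block decreasingly), and a pigeonhole argument shows it is the
   lexicographically smallest one; hence the lsd words are exactly these words. The property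
   survives cutting and standardizing, so MPR_lsd is a subcoalgebra. Since an lsd word is determined
   by its length and descent set, pi maps the lsd basis onto the F_alpha, which are unitriangular
   against the compositions under refinement; so pi is bijective on MPR_lsd. Its inverse is linear,
   and applying it to both tensor legs of the identity mu_Q o pi = (pi x pi) o mu_MPR shows that it
   is a coalgebra morphism. *)

theory Submission
  imports Defs
begin

section \<open>Finitely supported functions and tensors\<close>

lemma supp_delta [simp]: "supp (delta a) = {a}"
  by (simp add: supp_def delta_def)

lemma lin_eq_sum_superset: "finite T \<Longrightarrow> supp x \<subseteq> T \<Longrightarrow> lin G x v = (\<Sum>w\<in>T. x w * G w v)"
  unfolding lin_def by (rule sum.mono_neutral_left) (auto simp: supp_def)

lemma lin_delta [simp]: "lin G (delta a) = G a"
  unfolding lin_def supp_delta by (simp add: delta_def)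

lemma lin_delta_eq: "finite (supp x) \<Longrightarrow> lin delta x = x"
  by (auto simp: lin_def delta_def supp_def fun_eq_iff if_distrib cong: if_cong)

lemma lin_cong: "(\<And>w. w \<in> supp x \<Longrightarrow> G w = H w) \<Longrightarrow> lin G x = lin H x"
  unfolding lin_def by auto

lemma supp_lin: "supp (lin G x) \<subseteq> (\<Union>w\<in>supp x. supp (G w))"
proof
  fix v assume "v \<in> supp (lin G x)"
  then have "(\<Sum>w\<in>supp x. x w * G w v) \<noteq> 0"
    by (simp add: supp_def lin_def)
  then obtain w where "w \<in> supp x" "x w * G w v \<noteq> 0"
    using sum.not_neutral_contains_not_neutral by blast
  then show "v \<in> (\<Union>w\<in>supp x. supp (G w))"
    by (auto simp: supp_def)
qed

lemma finite_supp_lin: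
  "finite (supp x) \<Longrightarrow> (\<And>w. w \<in> supp x \<Longrightarrow> finite (supp (G w))) \<Longrightarrow> finite (supp (lin G x))"
  using supp_lin by (rule finite_subset) auto

lemma lin_add:
  assumes "finite (supp x)" "finite (supp y)"
  shows "lin G (\<lambda>w. x w + y w) = (\<lambda>v. lin G x v + lin G y v)"
proof
  fix v
  have "supp (\<lambda>w. x w + y w) \<subseteq> supp x \<union> supp y"
    by (auto simp: supp_def)
  then show "lin G (\<lambda>w. x w + y w) v = lin G x v + lin G y v"
    using assms
    by (simp add: lin_eq_sum_superset[of "supp x \<union> supp y"] distrib_right sum.distrib)
qed

lemma lin_diff:
  assumes "finite (supp x)" "finite (supp y)"
  shows "lin G (\<lambda>w. x w - y w) = (\<lambda>v. lin G x v - lin G y v)"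
proof
  fix v
  have "supp (\<lambda>w. x w - y w) \<subseteq> supp x \<union> supp y"
    by (auto simp: supp_def)
  then show "lin G (\<lambda>w. x w - y w) v = lin G x v - lin G y v"
    using assms
    by (simp add: lin_eq_sum_superset[of "supp x \<union> supp y"] left_diff_distrib sum_subtractf)
qed

lemma lin_lin:
  assumes "finite (supp x)" "\<And>w. w \<in> supp x \<Longrightarrow> finite (supp (G w))"
  shows "lin H (lin G x) = lin (\<lambda>w. lin H (G w)) x"
proof
  fix v
  let ?T = "\<Union>w\<in>supp x. supp (G w)"
  have T: "finite ?T"
    using assms by blast
  have "lin H (lin G x) v = (\<Sum>u\<in>?T. (\<Sum>w\<in>supp x. x w * G w u) * H u v)"
    using lin_eq_sum_superset[OF T supp_lin] by (simp add: lin_def)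
  also have "\<dots> = (\<Sum>w\<in>supp x. x w * (\<Sum>u\<in>?T. G w u * H u v))"
    by (simp add: sum_distrib_left sum_distrib_right mult.assoc sum.swap[of _ ?T])
  also have "\<dots> = (\<Sum>w\<in>supp x. x w * lin H (G w) v)"
  proof (intro sum.cong refl)
    fix w assume "w \<in> supp x"
    then have "supp (G w) \<subseteq> ?T"
      by blast
    then show "x w * (\<Sum>u\<in>?T. G w u * H u v) = x w * lin H (G w) v"
      using lin_eq_sum_superset[OF T, of "G w" H v] by simp
  qed
  finally show "lin H (lin G x) v = lin (\<lambda>w. lin H (G w)) x v"
    by (simp add: lin_def)
qed

definition tensor :: "('a \<Rightarrow> int) \<Rightarrow> ('a \<Rightarrow> int) \<Rightarrow> 'a \<times> 'a \<Rightarrow> int" where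
  "tensor y z = (\<lambda>(u, v). y u * z v)"

lemma tensor_delta [simp]: "tensor (delta a) (delta b) = delta (a, b)"
  by (auto simp: tensor_def delta_def)

lemma supp_tensor: "supp (tensor y z) = supp y \<times> supp z"
  by (auto simp: supp_def tensor_def)

lemma lin_tensor:
  assumes "finite (supp y)" "finite (supp z)"
  shows "lin (\<lambda>(c, d). tensor (G c) (H d)) (tensor y z) = tensor (lin G y) (lin H z)"
proof (rule ext, clarify)
  fix u v
  have "lin (\<lambda>(c, d). tensor (G c) (H d)) (tensor y z) (u, v)
      = (\<Sum>(c, d)\<in>supp y \<times> supp z. y c * z d * (G c u * H d v))"
    unfolding lin_def supp_tensor by (simp add: tensor_def case_prod_unfold)
  also have "\<dots> = (\<Sum>c\<in>supp y. y c * G c u) * (\<Sum>d\<in>supp z. z d * H d v)"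
    by (simp add: sum_product sum.cartesian_product mult_ac)
  finally show "lin (\<lambda>(c, d). tensor (G c) (H d)) (tensor y z) (u, v)
      = tensor (lin G y) (lin H z) (u, v)"
    by (simp add: tensor_def lin_def)
qed

lemma tensor_map_eq_lin: "tensor_map g h t = lin (\<lambda>(a, b). tensor (g (delta a)) (h (delta b))) t"
  by (auto simp: tensor_map_def lin_def tensor_def case_prod_unfold mult.assoc fun_eq_iff)

lemma tensor_map_lin:
  "finite (supp x) \<Longrightarrow> (\<And>w. w \<in> supp x \<Longrightarrow> finite (supp (M w)))
    \<Longrightarrow> tensor_map g h (lin M x) = lin (\<lambda>w. tensor_map g h (M w)) x"
  unfolding tensor_map_eq_lin by (rule lin_lin)

lemma tensor_map_cong:
  assumes "\<And>a b. (a, b) \<in> supp t \<Longrightarrow> g (delta a) = g' (delta a) \<and> h (delta b) = h' (delta b)"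
  shows "tensor_map g h t = tensor_map g' h' t"
  unfolding tensor_map_eq_lin using assms by (intro lin_cong) auto

lemma tensor_map_id: "finite (supp t) \<Longrightarrow> tensor_map (\<lambda>x. x) (\<lambda>x. x) t = t"
  by (simp add: tensor_map_eq_lin case_prod_unfold lin_delta_eq)

lemma tensor_map_tensor_map:
  assumes "finite (supp t)"
    and "\<And>a b. (a, b) \<in> supp t \<Longrightarrow> finite (supp (h (delta a))) \<and> finite (supp (h' (delta b)))"
    and "\<And>a b. (a, b) \<in> supp t \<Longrightarrow> g (h (delta a)) = lin (\<lambda>c. g (delta c)) (h (delta a))
                                  \<and> g' (h' (delta b)) = lin (\<lambda>c. g' (delta c)) (h' (delta b))"
  shows "tensor_map g g' (tensor_map h h' t) = tensor_map (\<lambda>x. g (h x)) (\<lambda>x. g' (h' x)) t"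
proof -
  have "tensor_map g g' (tensor_map h h' t)
      = lin (\<lambda>(a, b). lin (\<lambda>(c, d). tensor (g (delta c)) (g' (delta d)))
                              (tensor (h (delta a)) (h' (delta b)))) t"
    unfolding tensor_map_eq_lin using assms(1,2)
    by (subst lin_lin) (auto simp: supp_tensor case_prod_unfold)
  also have "\<dots> = lin (\<lambda>(a, b). tensor (g (h (delta a))) (g' (h' (delta b)))) t"
    using assms(2,3) by (intro lin_cong) (auto simp: lin_tensor)
  finally show ?thesis
    by (simp add: tensor_map_eq_lin)
qed

section \<open>Compositions\<close>

lemma psums_eq_image: "psums c = (\<lambda>i. sum_list (take i c)) ` {1..<length c}"
  by (auto simp: psums_def)

lemma psums_Nil [simp]: "psums [] = {}"
  by (simp add: psums_def)

lemma psums_Cons: "psums (x # r) = (if r = [] then {} else insert x ((+) x ` psums r))"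
proof (cases "r = []")
  case False
  then have "{1..<Suc (length r)} = insert 1 (Suc ` {1..<length r})"
    by (auto simp: image_Suc_atLeastLessThan)
  then show ?thesis
    using False by (simp add: psums_eq_image image_image del: image_Suc_atLeastLessThan)
qed (simp add: psums_def)

lemma psums_append:
  "psums (u @ v) =
     psums u \<union> (if u \<noteq> [] \<and> v \<noteq> [] then {sum_list u} else {}) \<union> (+) (sum_list u) ` psums v"
  by (induction u) (auto simp: psums_Cons image_Un image_image add.assoc)

lemma composition_Nil [simp]: "composition []"
  by (simp add: composition_def)

lemma composition_Cons [simp]: "composition (x # r) \<longleftrightarrow> 0 < x \<and> composition r"
  by (simp add: composition_def)

lemma composition_append [simp]: "composition (u @ v) \<longleftrightarrow> composition u \<and> composition v"
  by (auto simp: composition_def)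

lemma sum_list_composition_pos_iff: "composition c \<Longrightarrow> 0 < sum_list c \<longleftrightarrow> c \<noteq> []"
  by (cases c) auto

lemma psums_composition_bounds: "composition c \<Longrightarrow> x \<in> psums c \<Longrightarrow> 0 < x \<and> x < sum_list c"
proof (induction c arbitrary: x)
  case (Cons y r)
  then have "r \<noteq> [] \<Longrightarrow> 0 < sum_list r"
    using sum_list_composition_pos_iff[of r] by simp
  with Cons show ?case
    by (auto simp: psums_Cons split: if_splits)
qed simp

lemma length_le_sum_list_composition: "composition b \<Longrightarrow> length b \<le> sum_list b"
  by (induction b) auto

lemma finite_compositions: "finite {b. composition b \<and> sum_list b = n}"
proof (rule finite_subset)
  show "{b. composition b \<and> sum_list b = n} \<subseteq> {xs. set xs \<subseteq> {0..n} \<and> length xs \<le> n}"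
    using member_le_sum_list length_le_sum_list_composition by fastforce
qed (rule finite_lists_length_le, simp)

fun diffs :: "nat \<Rightarrow> nat list \<Rightarrow> nat list" where
  "diffs a [] = []"
| "diffs a (y # ys) = (y - a) # diffs y ys"

lemma diffs_eq_Nil_iff [simp]: "diffs a xs = [] \<longleftrightarrow> xs = []"
  by (cases xs) auto

lemma diffs_eq_map_zip: "map (\<lambda>(x, y). y - x) (zip (butlast (a # xs)) xs) = diffs a xs"
proof (induction xs arbitrary: a)
  case (Cons y ys)
  then show ?case by (cases ys) auto
qed simp

lemma diffs_sorted:
  assumes "sorted_wrt (<) (a # xs)" "xs \<noteq> []"
  shows "sum_list (diffs a xs) = last xs - a \<and> composition (diffs a xs)
     \<and> psums (diffs a xs) = (\<lambda>z. z - a) ` set (butlast xs)"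
  using assms
proof (induction xs arbitrary: a)
  case (Cons y ys)
  show ?case
  proof (cases "ys = []")
    case False
    have ay: "a < y" and y_less: "\<forall>z\<in>set ys. y < z"
      using Cons.prems by auto
    note IH = Cons.IH[of y, OF _ False]
    have "(+) (y - a) ` (\<lambda>z. z - y) ` set (butlast ys) = (\<lambda>z. z - a) ` set (butlast ys)"
      using ay y_less by (force simp: image_image dest: in_set_butlastD intro!: image_cong)
    moreover have "y + (last ys - y) - a = last ys - a"
      using y_less False last_in_set[of ys] by fastforce
    ultimately show ?thesis
      using IH Cons.prems ay False by (auto simp: psums_Cons)
  qed (use Cons.prems in \<open>simp add: psums_Cons\<close>)
qed simp

lemma comp_is_composition_with_psums:
  assumes "D \<subseteq> {1..<n}"
  shows "sum_list (comp n D) = n \<and> composition (comp n D) \<and> psums (comp n D) = D"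
proof (cases "n = 0")
  case False
  have fin: "finite D"
    using assms finite_subset by blast
  have "comp n D = diffs 0 (sorted_list_of_set D @ [n])"
    using False by (simp add: comp_def Let_def diffs_eq_map_zip[symmetric])
  moreover have "sorted_wrt (<) (0 # sorted_list_of_set D @ [n])"
    using assms fin False by (auto simp: sorted_wrt_append)
  ultimately show ?thesis
    using diffs_sorted fin by simp
qed (use assms in \<open>simp add: comp_def composition_def\<close>)

lemma finite_psums [simp]: "finite (psums c)"
  by (simp add: psums_eq_image)

lemma Min_psums_Cons: "composition r \<Longrightarrow> r \<noteq> [] \<Longrightarrow> Min (psums (x # r)) = x"
  using psums_composition_bounds[of r] by (intro Min_eqI) (auto simp: psums_Cons)

lemma composition_eqI_psums:
  "composition b \<Longrightarrow> composition c \<Longrightarrow> sum_list b = sum_list c \<Longrightarrow> psums b = psums c \<Longrightarrow> b = c"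
proof (induction b arbitrary: c)
  case Nil
  then show ?case
    by (cases c) auto
next
  case (Cons x r)
  obtain y s where c: "c = y # s"
    using Cons.prems by (cases c) auto
  have r_s: "composition r" "composition s" "r = [] \<longleftrightarrow> s = []"
    using Cons.prems c by (auto simp: psums_Cons split: if_splits)
  show ?case
  proof (cases "r = []")
    case False
    then have "x = y"
      using Min_psums_Cons[of r x] Min_psums_Cons[of s y] r_s Cons.prems(4) c by simp
    have "x \<notin> (+) x ` psums r" "x \<notin> (+) x ` psums s"
      using psums_composition_bounds r_s by fastforce+
    then have "(+) x ` psums r = (+) x ` psums s"
      using Cons.prems(4) False r_s c \<open>x = y\<close> by (simp add: psums_Cons) (metis Diff_insert_absorb)
    then have "r = s"
      using Cons.IH r_s Cons.prems(3) c \<open>x = y\<close> by (simp add: inj_image_eq_iff)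
    then show ?thesis
      using c \<open>x = y\<close> by simp
  qed (use r_s c Cons.prems in simp)
qed

section \<open>Standardization and descent sets\<close>

lemma perm_wordI:
  assumes "distinct w" "set w \<subseteq> {1..length w}"
  shows "perm_word w"
proof -
  have "card (set w) = card {1..length w}"
    using distinct_card[OF assms(1)] by simp
  then show ?thesis
    using assms card_subset_eq[of "{1..length w}" "set w"] by (simp add: perm_word_def)
qed

lemma length_st [simp]: "length (st x) = length x"
  by (simp add: st_def)

lemma nth_st: "p < length x \<Longrightarrow> st x ! p = card {y \<in> set x. y \<le> x ! p}"
  by (simp add: st_def)

lemma st_nth_less_iff:
  assumes "p < length x" "q < length x"
  shows "st x ! p < st x ! q \<longleftrightarrow> x ! p < x ! q"
proof
  assume "x ! p < x ! q"
  then have "{y \<in> set x. y \<le> x ! p} \<subset> {y \<in> set x. y \<le> x ! q}"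
    using assms by force
  then show "st x ! p < st x ! q"
    using assms by (simp add: nth_st psubset_card_mono)
next
  assume "st x ! p < st x ! q"
  moreover have "x ! q \<le> x ! p \<Longrightarrow> st x ! q \<le> st x ! p"
    using assms by (auto simp: nth_st intro: card_mono)
  ultimately show "x ! p < x ! q"
    by linarith
qed

lemma perm_word_st:
  assumes "distinct x"
  shows "perm_word (st x)"
proof (rule perm_wordI)
  show "distinct (st x)"
  proof (subst distinct_conv_nth, intro allI impI)
    fix i j assume ij: "i < length (st x)" "j < length (st x)" "i \<noteq> j"
    then have "x ! i \<noteq> x ! j"
      using assms by (simp add: nth_eq_iff_index_eq)
    then have "x ! i < x ! j \<or> x ! j < x ! i"
      by linarith
    then show "st x ! i \<noteq> st x ! j"
      using ij st_nth_less_iff[of i x j] st_nth_less_iff[of j x i] by auto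
  qed
  have "st x ! p \<in> {1..length x}" if "p < length x" for p
  proof -
    have "0 < card {y \<in> set x. y \<le> x ! p}"
      using that by (auto simp: card_gt_0_iff intro!: exI[of _ "x ! p"])
    moreover have "card {y \<in> set x. y \<le> x ! p} \<le> length x"
      using card_mono[of "set x" "{y \<in> set x. y \<le> x ! p}"] card_length[of x] by auto
    ultimately show ?thesis
      using that by (simp add: nth_st)
  qed
  then show "set (st x) \<subseteq> {1..length (st x)}"
    by (auto simp: in_set_conv_nth)
qed

lemma desc_subset: "desc w \<subseteq> {1..<length w}"
  by (auto simp: desc_def)

lemma desc_st [simp]: "desc (st x) = desc x"
  unfolding desc_def by (auto simp: st_nth_less_iff)

lemma desc_iff_not_less:
  assumes "distinct w" "0 < k" "k < length w"
  shows "k \<in> desc w \<longleftrightarrow> \<not> w ! (k - 1) < w ! k"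
proof -
  have "w ! (k - 1) \<noteq> w ! k"
    using assms by (simp add: nth_eq_iff_index_eq)
  then show ?thesis
    using assms(2,3) by (auto simp: desc_def)
qed

lemma desc_take: "desc (take i w) = {d \<in> desc w. d < i}"
  unfolding desc_def by auto

lemma desc_drop: "desc (drop i w) = {d. 0 < d \<and> d + i \<in> desc w}"
  unfolding desc_def by (auto simp: add.commute)

definition F_word :: "nat list \<Rightarrow> nat list \<Rightarrow> int" where
  "F_word w b = (if composition b \<and> sum_list b = length w \<and> desc w \<subseteq> psums b then 1 else 0)"

lemma F_comp_desc: "F (comp (length w) (desc w)) = F_word w"
  using comp_is_composition_with_psums[OF desc_subset[of w]]
  by (auto simp: F_def F_word_def refines_def)

lemma F_word_st [simp]: "F_word (st x) = F_word x"
  by (simp add: F_word_def fun_eq_iff)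

lemma desc_take_drop_subset_psums:
  assumes "composition u" "sum_list u = k" "desc w \<subseteq> psums (u @ v)"
  shows "desc (take k w) \<subseteq> psums u \<and> desc (drop k w) \<subseteq> psums v"
proof (intro conjI subsetI)
  fix d assume "d \<in> desc (take k w)"
  then show "d \<in> psums u"
    using assms(2,3) by (auto simp: desc_take psums_append split: if_splits)
next
  fix d assume "d \<in> desc (drop k w)"
  then have "d + k \<in> psums (u @ v)" "0 < d"
    using assms(3) by (auto simp: desc_drop)
  moreover have "d + k \<notin> psums u"
    using psums_composition_bounds[OF assms(1)] assms(2) by fastforce
  ultimately show "d \<in> psums v"
    using assms(2) by (auto simp: psums_append add.commute split: if_splits)
qed

lemma desc_subset_psums_append:
  assumes "sum_list u = k" "sum_list v = length w - k" "k \<le> length w"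
    and "desc (take k w) \<subseteq> psums u" "desc (drop k w) \<subseteq> psums v"
  shows "desc w \<subseteq> psums (u @ v)"
proof
  fix d assume d: "d \<in> desc w"
  then have "0 < d" "d < length w"
    using desc_subset[of w] by auto
  consider "d < k" | "d = k" | "k < d"
    by linarith
  then show "d \<in> psums (u @ v)"
  proof cases
    case 1
    then show ?thesis
      using assms(4) d by (auto simp: desc_take psums_append)
  next
    case 2
    then show ?thesis
      using assms(1,2) \<open>0 < d\<close> \<open>d < length w\<close> by (auto simp: psums_append)
  next
    case 3
    then have "d - k \<in> psums v"
      using assms(5) d by (auto simp: desc_drop)
    then have "d \<in> (+) k ` psums v"
      using 3 by (metis image_eqI le_add_diff_inverse less_imp_le)
    then show ?thesis
      using assms(1) by (simp add: psums_append)
  qed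
qed

lemma F_word_eq_0: "sum_list b \<noteq> length w \<Longrightarrow> F_word w b = 0"
  by (simp add: F_word_def)

lemma F_word_append:
  assumes "sum_list u \<le> length w"
  shows "F_word w (u @ v) = F_word (take (sum_list u) w) u * F_word (drop (sum_list u) w) v"
proof (cases "composition u \<and> composition v \<and> sum_list v = length w - sum_list u")
  case True
  then have "desc w \<subseteq> psums (u @ v) \<longleftrightarrow>
      desc (take (sum_list u) w) \<subseteq> psums u \<and> desc (drop (sum_list u) w) \<subseteq> psums v"
    using desc_take_drop_subset_psums desc_subset_psums_append assms by blast
  then show ?thesis
    using True assms by (simp add: F_word_def)
qed (use assms in \<open>auto simp: F_word_def\<close>)

lemma F_word_append_eq_sum_cuts:
  "F_word w (u @ v) = (\<Sum>i\<le>length w. F_word (st (take i w)) u * F_word (st (drop i w)) v)"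
proof -
  have "(\<Sum>i\<le>length w. F_word (st (take i w)) u * F_word (st (drop i w)) v)
      = (\<Sum>i\<le>length w. if i = sum_list u then F_word (take i w) u * F_word (drop i w) v else 0)"
    by (intro sum.cong) (simp_all add: F_word_eq_0)
  also have "\<dots> = F_word w (u @ v)"
    using F_word_append[of u w v] F_word_eq_0[of "u @ v" w] by simp
  finally show ?thesis ..
qed

section \<open>Lexicographically smallest permutations with given descents\<close>

definition splits_at_ascents :: "nat list \<Rightarrow> bool" where
  "splits_at_ascents w \<longleftrightarrow>
     (\<forall>k p q. 0 < k \<and> k < length w \<and> k \<notin> desc w \<and> p < k \<and> k \<le> q \<and> q < length w \<longrightarrow> w ! p < w ! q)"

lemma splits_at_ascents_st [simp]: "splits_at_ascents (st x) = splits_at_ascents x"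
  unfolding splits_at_ascents_def by (auto simp: st_nth_less_iff)

lemma splits_at_ascents_take: "splits_at_ascents w \<Longrightarrow> splits_at_ascents (take i w)"
  unfolding splits_at_ascents_def desc_take by auto

lemma splits_at_ascents_drop:
  assumes "splits_at_ascents w"
  shows "splits_at_ascents (drop i w)"
  unfolding splits_at_ascents_def
proof (intro allI impI)
  fix k p q
  assume h: "0 < k \<and> k < length (drop i w) \<and> k \<notin> desc (drop i w)
    \<and> p < k \<and> k \<le> q \<and> q < length (drop i w)"
  then have "0 < k + i \<and> k + i < length w \<and> k + i \<notin> desc w
    \<and> p + i < k + i \<and> k + i \<le> q + i \<and> q + i < length w"
    by (auto simp: desc_drop)
  then have "w ! (p + i) < w ! (q + i)"
    using assms unfolding splits_at_ascents_def by blast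
  moreover have "i \<le> length w"
    using h by auto
  ultimately show "drop i w ! p < drop i w ! q"
    by (simp add: add.commute)
qed

lemma lex_less_asym: "lex_less u v \<Longrightarrow> \<not> lex_less v u"
  unfolding lex_less_def by (rule lexord_asymmetric) (auto simp: asym_on_def)

lemma lex_less_total: "lex_less u v \<or> u = v \<or> lex_less v u"
  unfolding lex_less_def by (rule lexord_linear) auto

lemma lsd_unique: "lsd w \<Longrightarrow> lsd w' \<Longrightarrow> length w = length w' \<Longrightarrow> desc w = desc w' \<Longrightarrow> w = w'"
  unfolding lsd_def using lex_less_asym by metis

lemma descending_run_le:
  assumes "\<forall>k. j < k \<and> k < b \<longrightarrow> k \<in> desc t" "j \<le> p" "p < b"
  shows "t ! p \<le> t ! j"
  using assms(2,3)
proof (induction p)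
  case (Suc p)
  show ?case
  proof (cases "j = Suc p")
    case False
    then have "t ! Suc p < t ! p"
      using assms(1)[rule_format, of "Suc p"] Suc.prems by (auto simp: desc_def)
    moreover have "t ! p \<le> t ! j"
      using Suc False by simp
    ultimately show ?thesis
      by simp
  qed simp
qed simp

lemma obtain_next_non_member:
  assumes "j < (n :: nat)"
  obtains b where "j < b" "b \<le> n" "b < n \<Longrightarrow> b \<notin> D" "\<forall>k. j < k \<and> k < b \<longrightarrow> k \<in> D"
proof
  let ?P = "\<lambda>k. j < k \<and> (k = n \<or> k \<notin> D)"
  show "j < (LEAST k. ?P k)" "(LEAST k. ?P k) \<le> n" "(LEAST k. ?P k) < n \<Longrightarrow> (LEAST k. ?P k) \<notin> D"
    using LeastI[of ?P n] Least_le[of ?P n] assms by auto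
  show "\<forall>k. j < k \<and> k < (LEAST k. ?P k) \<longrightarrow> k \<in> D"
  proof (intro allI impI)
    fix k assume k: "j < k \<and> k < (LEAST k. ?P k)"
    then have "\<not> ?P k" "k < n"
      using not_less_Least[of k ?P] Least_le[of ?P n] assms by auto
    then show "k \<in> D"
      using k by auto
  qed
qed

lemma descending_run_letters_subset:
  assumes w: "perm_word w" "splits_at_ascents w" and t: "perm_word t" "length t = length w"
    and j: "take j t = take j w" "t ! j < w ! j"
    and b: "j < b" "b \<le> length w" "b < length w \<Longrightarrow> b \<notin> desc w"
    and run: "\<forall>k. j < k \<and> k < b \<longrightarrow> k \<in> desc t"
  shows "(!) t ` {j..<b} \<subseteq> (!) w ` {j<..<b}"
proof
  fix x assume "x \<in> (!) t ` {j..<b}"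
  then obtain p where p: "j \<le> p" "p < b" "x = t ! p"
    by auto
  have x_less: "x < w ! j"
    using descending_run_le[OF run p(1,2)] j(2) p(3) by simp
  have "x \<in> set w"
    using p b(2) t w(1) by (auto simp: perm_word_def)
  then obtain q where q: "q < length w" "x = w ! q"
    by (auto simp: in_set_conv_nth)
  have "j \<le> q"
  proof (rule ccontr)
    assume "\<not> j \<le> q"
    then have "t ! q = t ! p"
      using j(1) p(3) q(2) nth_take[of q j t] nth_take[of q j w] by simp
    then show False
      using t \<open>\<not> j \<le> q\<close> p q b(2) by (simp add: perm_word_def nth_eq_iff_index_eq)
  qed
  moreover have "q \<noteq> j"
    using x_less q by auto
  moreover have "q < b"
  proof (rule ccontr)
    assume "\<not> q < b"
    then have "0 < b" "b < length w" "b \<notin> desc w" "b \<le> q"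
      using b q by auto
    then have "w ! j < w ! q"
      using w(2) b(1) q(1) unfolding splits_at_ascents_def by blast
    then show False
      using x_less q by simp
  qed
  ultimately show "x \<in> (!) w ` {j<..<b}"
    using q by auto
qed

text \<open>If t were lexicographically smaller, with first difference t!j < w!j, then t would have to
  place b - j distinct letters below w!j (a descending run up to the next ascent b of w) at
  positions from j to b - 1, while w, splitting at b, has only b - j - 1 slots for them.\<close>
lemma lsd_if_splits_at_ascents:
  assumes w: "perm_word w" "splits_at_ascents w"
  shows "lsd w"
  unfolding lsd_def
proof (intro conjI allI impI w(1))
  fix t assume t: "perm_word t \<and> length t = length w \<and> desc t = desc w"
  show "w = t \<or> lex_less w t"
  proof (rule ccontr)
    assume "\<not> (w = t \<or> lex_less w t)"
    then have "lex_less t w"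
      using lex_less_total by blast
    then obtain j where j: "j < length w" "take j t = take j w" "t ! j < w ! j"
      using t unfolding lex_less_def lexord_take_index_conv by auto
    then obtain b where b: "j < b" "b \<le> length w" "b < length w \<Longrightarrow> b \<notin> desc w"
      and run: "\<forall>k. j < k \<and> k < b \<longrightarrow> k \<in> desc w"
      using obtain_next_non_member[OF j(1), of "desc w"] by blast
    have "(!) t ` {j..<b} \<subseteq> (!) w ` {j<..<b}"
      using descending_run_letters_subset[OF w _ _ j(2,3) b] run t by simp
    moreover have "card ((!) t ` {j..<b}) = b - j"
      using t b(2) by (subst card_image) (auto simp: inj_on_def nth_eq_iff_index_eq perm_word_def)
    moreover have "card ((!) w ` {j<..<b}) \<le> b - j - 1"
      using card_image_le[of "{j<..<b}" "(!) w"] by simp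
    ultimately show False
      using card_mono[of "(!) w ` {j<..<b}" "(!) t ` {j..<b}"] b(1) by fastforce
  qed
qed

text \<open>Cutting {0..<n} at the points of C, each block [a, b) between consecutive cut points
  is filled with the letters b, b - 1, ..., a + 1.\<close>
definition reversed_blocks :: "nat set \<Rightarrow> nat \<Rightarrow> nat" where
  "reversed_blocks C p = Max {c \<in> C. c \<le> p} + Min {c \<in> C. p < c} - p"

lemma reversed_blocks_eq_block:
  assumes "finite C" "0 \<in> C" "n \<in> C" "p < n"
  obtains a b where "a \<in> C" "a \<le> p" "\<forall>c\<in>C. c \<le> p \<longrightarrow> c \<le> a"
    "b \<in> C" "p < b" "\<forall>c\<in>C. p < c \<longrightarrow> b \<le> c" "reversed_blocks C p = a + b - p"
proof
  have "Max {c \<in> C. c \<le> p} \<in> {c \<in> C. c \<le> p}"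
    by (rule Max_in) (use assms in auto)
  then show "Max {c \<in> C. c \<le> p} \<in> C" "Max {c \<in> C. c \<le> p} \<le> p"
    by auto
  have "Min {c \<in> C. p < c} \<in> {c \<in> C. p < c}"
    by (rule Min_in) (use assms in auto)
  then show "Min {c \<in> C. p < c} \<in> C" "p < Min {c \<in> C. p < c}"
    by auto
  show "\<forall>c\<in>C. c \<le> p \<longrightarrow> c \<le> Max {c \<in> C. c \<le> p}" "\<forall>c\<in>C. p < c \<longrightarrow> Min {c \<in> C. p < c} \<le> c"
    using assms(1) by auto
qed (simp add: reversed_blocks_def)

lemma reversed_blocks_order:
  assumes "finite C" "0 \<in> C" "n \<in> C" "p < q" "q < n"
  shows "if \<exists>c\<in>C. p < c \<and> c \<le> q then reversed_blocks C p < reversed_blocks C q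
         else reversed_blocks C q < reversed_blocks C p"
proof -
  obtain a b where p: "a \<in> C" "a \<le> p" "\<forall>c\<in>C. c \<le> p \<longrightarrow> c \<le> a"
      "b \<in> C" "p < b" "\<forall>c\<in>C. p < c \<longrightarrow> b \<le> c" "reversed_blocks C p = a + b - p"
    using reversed_blocks_eq_block[OF assms(1-3), of p] assms(4,5) by (metis order.strict_trans)
  obtain a' b' where q: "a' \<in> C" "a' \<le> q" "\<forall>c\<in>C. c \<le> q \<longrightarrow> c \<le> a'"
      "b' \<in> C" "q < b'" "\<forall>c\<in>C. q < c \<longrightarrow> b' \<le> c" "reversed_blocks C q = a' + b' - q"
    using reversed_blocks_eq_block[OF assms(1-3,5)] by metis
  show ?thesis
  proof (cases "\<exists>c\<in>C. p < c \<and> c \<le> q")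
    case True
    then obtain c where "c \<in> C" "p < c" "c \<le> q"
      by blast
    then have "b \<le> c" "c \<le> a'"
      using p(6) q(3) by auto
    then show ?thesis
      unfolding if_P[OF True] using p(2,7) q(5,7) by simp
  next
    case False
    then have "a' = a" "b' = b"
      using p q assms(4) by (meson antisym not_le order.trans less_imp_le)+
    moreover have "q < b"
      using False p(4,5) by auto
    ultimately show ?thesis
      unfolding if_not_P[OF False] using p(2,7) q(7) assms(4) by simp
  qed
qed

lemma exists_perm_word_with_cut_points:
  assumes "finite C" "0 \<in> C" "n \<in> C"
  shows "\<exists>w. perm_word w \<and> length w = n \<and>
           (\<forall>p q. p < q \<and> q < n \<longrightarrow> (w ! p < w ! q \<longleftrightarrow> (\<exists>c\<in>C. p < c \<and> c \<le> q)))"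
proof (intro exI conjI allI impI)
  let ?w = "map (reversed_blocks C) [0..<n]"
  show "length ?w = n"
    by simp
  show "?w ! p < ?w ! q \<longleftrightarrow> (\<exists>c\<in>C. p < c \<and> c \<le> q)" if "p < q \<and> q < n" for p q
    using reversed_blocks_order[OF assms, of p q] that by (auto split: if_splits)
  show "perm_word ?w"
  proof (rule perm_wordI)
    show "distinct ?w"
    proof (subst distinct_conv_nth, intro allI impI)
      fix i j assume "i < length ?w" "j < length ?w" "i \<noteq> j"
      then show "?w ! i \<noteq> ?w ! j"
        using reversed_blocks_order[OF assms, of i j] reversed_blocks_order[OF assms, of j i]
        by (cases "i < j") (auto split: if_splits)
    qed
    have "reversed_blocks C p \<in> {1..n}" if p: "p < n" for p
    proof -
      obtain a b where "a \<le> p" "p < b" "\<forall>c\<in>C. p < c \<longrightarrow> b \<le> c" "reversed_blocks C p = a + b - p"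
        using reversed_blocks_eq_block[OF assms p] by metis
      moreover have "b \<le> n"
        using calculation(3) assms(3) p by blast
      ultimately show ?thesis
        by auto
    qed
    then show "set ?w \<subseteq> {1..length ?w}"
      by auto
  qed
qed

lemma exists_perm_word_splits_at_ascents:
  assumes D: "D \<subseteq> {1..<n}"
  shows "\<exists>w. perm_word w \<and> length w = n \<and> desc w = D \<and> splits_at_ascents w"
proof -
  define C where "C = insert 0 (insert n ({1..<n} - D))"
  obtain w where w: "perm_word w" "length w = n"
    and order: "\<And>p q. p < q \<Longrightarrow> q < n \<Longrightarrow> w ! p < w ! q \<longleftrightarrow> (\<exists>c\<in>C. p < c \<and> c \<le> q)"
    using exists_perm_word_with_cut_points[of C n] by (auto simp: C_def)
  have "k \<in> desc w \<longleftrightarrow> k \<in> D" for k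
  proof (cases "0 < k \<and> k < n")
    case True
    then have "k \<in> desc w \<longleftrightarrow> \<not> w ! (k - 1) < w ! k"
      using desc_iff_not_less[of w k] w by (simp add: perm_word_def)
    also have "\<dots> \<longleftrightarrow> \<not> (\<exists>c\<in>C. k - 1 < c \<and> c \<le> k)"
      using order[of "k - 1" k] True by simp
    also have "\<dots> \<longleftrightarrow> k \<notin> C"
    proof -
      have "k - 1 < c \<and> c \<le> k \<longleftrightarrow> c = k" for c
        using True by auto
      then show ?thesis
        by auto
    qed
    also have "\<dots> \<longleftrightarrow> k \<in> D"
      using True by (auto simp: C_def)
    finally show ?thesis .
  qed (use D w(2) desc_subset[of w] in auto)
  moreover have "splits_at_ascents w"
    unfolding splits_at_ascents_def
  proof (intro allI impI)
    fix k p q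
    assume "0 < k \<and> k < length w \<and> k \<notin> desc w \<and> p < k \<and> k \<le> q \<and> q < length w"
    then show "w ! p < w ! q"
      using order[of p q] \<open>k \<in> desc w \<longleftrightarrow> k \<in> D\<close> w(2) by (auto simp: C_def)
  qed
  ultimately show ?thesis
    using w by blast
qed

lemma lsd_iff_splits_at_ascents: "lsd w \<longleftrightarrow> perm_word w \<and> splits_at_ascents w"
proof
  assume "lsd w"
  obtain w' where w': "perm_word w'" "length w' = length w" "desc w' = desc w"
    "splits_at_ascents w'"
    using exists_perm_word_splits_at_ascents[OF desc_subset[of w]] by blast
  then have "w' = w"
    using lsd_if_splits_at_ascents lsd_unique \<open>lsd w\<close> by blast
  then show "perm_word w \<and> splits_at_ascents w"
    using w' by simp
qed (simp add: lsd_if_splits_at_ascents)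

lemma exists_lsd: "D \<subseteq> {1..<n} \<Longrightarrow> \<exists>w. lsd w \<and> length w = n \<and> desc w = D"
  using exists_perm_word_splits_at_ascents lsd_if_splits_at_ascents by blast

lemma distinct_if_lsd: "lsd w \<Longrightarrow> distinct w"
  by (simp add: lsd_def perm_word_def)

lemma lsd_st_take: "lsd w \<Longrightarrow> lsd (st (take i w))"
  by (simp add: lsd_iff_splits_at_ascents splits_at_ascents_take perm_word_st distinct_if_lsd)

lemma lsd_st_drop: "lsd w \<Longrightarrow> lsd (st (drop i w))"
  by (simp add: lsd_iff_splits_at_ascents splits_at_ascents_drop perm_word_st distinct_if_lsd)

section \<open>The map pi\<close>

lemma pi_map_eq_lin: "pi_map = lin F_word"
  by (simp add: pi_map_def F_comp_desc)

lemma pi_map_delta [simp]: "pi_map (delta w) = F_word w"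
  by (simp add: pi_map_eq_lin)

lemma supp_F_word: "supp (F_word w) \<subseteq> {b. composition b \<and> sum_list b = length w}"
  by (auto simp: supp_def F_word_def split: if_splits)

lemma finite_supp_F_word: "finite (supp (F_word w))"
  using finite_subset[OF supp_F_word finite_compositions] .

lemma pi_map_in_QSymm: "finite (supp x) \<Longrightarrow> pi_map x \<in> QSymm"
  unfolding QSymm_def pi_map_eq_lin
  using finite_supp_lin[of x F_word] finite_supp_F_word supp_lin[of F_word x] supp_F_word by blast

lemma F_word_in_QSymm: "F_word w \<in> QSymm"
  using pi_map_in_QSymm[of "delta w"] by simp

lemma mu_Q_basis_eq: "mu_Q_basis b (u, v) = (if b = u @ v then 1 else 0)"
proof -
  have "i = length u" if "i \<le> length b" "take i b = u" for i
    using that by auto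
  then have "{i \<in> {0..length b}. take i b = u \<and> drop i b = v}
      = (if b = u @ v then {length u} else {})"
    by auto
  then show ?thesis
    by (simp add: mu_Q_basis_def)
qed

lemma mu_Q_apply: "finite (supp y) \<Longrightarrow> mu_Q y (u, v) = y (u @ v)"
  by (simp add: mu_Q_def lin_def mu_Q_basis_eq if_distrib supp_def cong: if_cong)

lemma supp_mu_MPR_basis:
  "supp (mu_MPR_basis w) \<subseteq> (\<lambda>i. (st (take i w), st (drop i w))) ` {..length w}"
  by (auto simp: supp_def mu_MPR_basis_def)

lemma finite_supp_mu_MPR_basis: "finite (supp (mu_MPR_basis w))"
  using finite_subset[OF supp_mu_MPR_basis] by blast

lemma sum_mu_MPR_basis:
  "(\<Sum>ab\<in>supp (mu_MPR_basis w). mu_MPR_basis w ab * G ab)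
     = (\<Sum>i\<le>length w. G (st (take i w), st (drop i w)))"
proof -
  define cut where "cut i = (st (take i w), st (drop i w))" for i
  have "(\<Sum>ab\<in>supp (mu_MPR_basis w). mu_MPR_basis w ab * G ab)
      = (\<Sum>ab\<in>cut ` {..length w}. mu_MPR_basis w ab * G ab)"
    using supp_mu_MPR_basis unfolding cut_def by (intro sum.mono_neutral_left) (auto simp: supp_def)
  also have "\<dots> = (\<Sum>ab\<in>cut ` {..length w}. \<Sum>i\<in>{i \<in> {..length w}. cut i = ab}. G (cut i))"
    by (intro sum.cong refl) (auto simp: mu_MPR_basis_def cut_def atLeast0AtMost)
  also have "\<dots> = (\<Sum>i\<le>length w. G (cut i))"
    by (rule sum.image_gen[symmetric]) simp
  finally show ?thesis
    by (simp add: cut_def)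
qed

lemma comult_F_word:
  "mu_Q (F_word w) = tensor_map pi_map pi_map (mu_MPR_basis w)"
proof (rule ext, clarify)
  fix u v
  have "tensor_map pi_map pi_map (mu_MPR_basis w) (u, v)
      = (\<Sum>ab\<in>supp (mu_MPR_basis w). mu_MPR_basis w ab * (F_word (fst ab) u * F_word (snd ab) v))"
    by (simp add: tensor_map_def mult.assoc)
  also have "\<dots> = F_word w (u @ v)"
    by (simp add: sum_mu_MPR_basis F_word_append_eq_sum_cuts)
  finally show "mu_Q (F_word w) (u, v) = tensor_map pi_map pi_map (mu_MPR_basis w) (u, v)"
    by (simp add: mu_Q_apply finite_supp_F_word)
qed

lemma comult_pi_map:
  assumes "finite (supp x)"
  shows "mu_Q (pi_map x) = tensor_map pi_map pi_map (mu_MPR x)"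
proof -
  have "mu_Q (pi_map x) = lin (\<lambda>w. mu_Q (F_word w)) x"
    unfolding mu_Q_def pi_map_eq_lin using assms finite_supp_F_word by (rule lin_lin)
  also have "\<dots> = lin (\<lambda>w. tensor_map pi_map pi_map (mu_MPR_basis w)) x"
    by (simp add: comult_F_word)
  also have "\<dots> = tensor_map pi_map pi_map (mu_MPR x)"
    unfolding mu_MPR_def using assms finite_supp_mu_MPR_basis by (rule tensor_map_lin[symmetric])
  finally show ?thesis .
qed

lemma counit_pi_map:
  assumes "finite (supp x)"
  shows "counit (pi_map x) = counit x"
proof -
  have "F_word w [] = delta w []" for w
    by (auto simp: F_word_def delta_def desc_def)
  then show ?thesis
    using fun_cong[OF lin_delta_eq[OF assms], of "[]"]
    by (simp add: counit_def pi_map_eq_lin lin_def)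
qed

lemma lsd_if_comult_MPR_lsd:
  assumes x: "x \<in> MPR_lsd" and "mu_MPR x (u, v) \<noteq> 0"
  shows "lsd u \<and> lsd v"
proof -
  obtain w where w: "w \<in> supp x" "(u, v) \<in> supp (mu_MPR_basis w)"
    using assms(2) supp_lin[of mu_MPR_basis x] by (auto simp: mu_MPR_def supp_def)
  then obtain i where "u = st (take i w)" "v = st (drop i w)"
    using supp_mu_MPR_basis by blast
  moreover have "lsd w"
    using w x by (auto simp: MPR_lsd_def)
  ultimately show ?thesis
    using lsd_st_take lsd_st_drop by blast
qed

lemma finite_supp_if_MPR_lsd: "x \<in> MPR_lsd \<Longrightarrow> finite (supp x)"
  by (simp add: MPR_lsd_def)

lemma MPR_lsd_subset_MPR: "MPR_lsd \<subseteq> MPR"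
  by (auto simp: MPR_lsd_def MPR_def lsd_def)

lemma pi_map_add:
  "finite (supp x) \<Longrightarrow> finite (supp y) \<Longrightarrow> pi_map (\<lambda>w. x w + y w) = (\<lambda>w. pi_map x w + pi_map y w)"
  unfolding pi_map_eq_lin by (rule lin_add)

lemma coalg_morphism_pi_map: "coalg_morphism MPR_lsd mu_MPR mu_Q pi_map"
  unfolding coalg_morphism_def
  using pi_map_add comult_pi_map counit_pi_map finite_supp_if_MPR_lsd by blast

section \<open>Bijectivity of pi on lsd words\<close>

lemma delta_in_MPR_lsd: "lsd w \<Longrightarrow> delta w \<in> MPR_lsd"
  by (simp add: MPR_lsd_def)

lemma lin_in_MPR_lsd:
  assumes "finite (supp k)" "\<And>i. i \<in> supp k \<Longrightarrow> X i \<in> MPR_lsd"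
  shows "lin X k \<in> MPR_lsd"
proof -
  have "finite (\<Union>i\<in>supp k. supp (X i))" "(\<Union>i\<in>supp k. supp (X i)) \<subseteq> {w. lsd w}"
    using assms by (auto simp: MPR_lsd_def)
  then show ?thesis
    using supp_lin[of X k] finite_subset[OF supp_lin[of X k]] unfolding MPR_lsd_def by blast
qed

lemma pi_map_at_min_descents:
  assumes z: "finite (supp z)" "\<forall>w'\<in>supp z. lsd w'"
    and w: "w \<in> supp z" "\<forall>w'\<in>supp z. card (desc w) \<le> card (desc w')"
  shows "pi_map z (comp (length w) (desc w)) = z w"
proof -
  let ?c = "comp (length w) (desc w)"
  have "F_word w' ?c = (if w' = w then 1 else 0)" if "w' \<in> supp z" for w'
  proof -
    have c: "composition ?c" "sum_list ?c = length w" "psums ?c = desc w"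
      using comp_is_composition_with_psums[OF desc_subset[of w]] by auto
    have "w' = w" if "length w' = length w" "desc w' \<subseteq> desc w"
    proof -
      have "finite (desc w)"
        using desc_subset finite_subset by blast
      moreover have "card (desc w) \<le> card (desc w')"
        using w(2) \<open>w' \<in> supp z\<close> by blast
      ultimately have "desc w' = desc w"
        using card_subset_eq[of "desc w" "desc w'"] card_mono[of "desc w" "desc w'"] that(2) by simp
      then show ?thesis
        using lsd_unique[of w' w] z(2) w(1) \<open>w' \<in> supp z\<close> that(1) by blast
    qed
    then show ?thesis
      using c by (auto simp: F_word_def)
  qed
  then have "pi_map z ?c = (\<Sum>w'\<in>supp z. if w' = w then z w' else 0)"
    unfolding pi_map_eq_lin lin_def by (intro sum.cong) auto
  also have "\<dots> = z w"
    using z(1) w(1) by simp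
  finally show ?thesis .
qed

lemma supp_eq_empty_if_pi_map_eq_0:
  assumes "finite (supp z)" "\<forall>w\<in>supp z. lsd w" "pi_map z = (\<lambda>_. 0)"
  shows "supp z = {}"
proof (rule ccontr)
  assume "supp z \<noteq> {}"
  then obtain w where w: "w \<in> supp z" "\<forall>w'\<in>supp z. card (desc w) \<le> card (desc w')"
    using ex_has_least_nat[of "\<lambda>w. w \<in> supp z" _ "\<lambda>w. card (desc w)"] by blast
  then have "z w \<noteq> 0"
    by (simp add: supp_def)
  moreover have "pi_map z (comp (length w) (desc w)) = z w"
    by (rule pi_map_at_min_descents[OF assms(1,2) w])
  ultimately show False
    using assms(3) by simp
qed

lemma inj_on_pi_map: "inj_on pi_map MPR_lsd"
proof (rule inj_onI)
  fix x y assume x: "x \<in> MPR_lsd" and y: "y \<in> MPR_lsd" and eq: "pi_map x = pi_map y"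
  let ?z = "\<lambda>w. x w - y w"
  have fin: "finite (supp x)" "finite (supp y)"
    using x y by (auto simp: MPR_lsd_def)
  have sub: "supp ?z \<subseteq> supp x \<union> supp y"
    by (auto simp: supp_def)
  then have "finite (supp ?z)"
    using finite_subset[OF sub] fin by simp
  moreover have "\<forall>w\<in>supp ?z. lsd w"
    using sub x y by (auto simp: MPR_lsd_def)
  moreover have "pi_map ?z = (\<lambda>_. 0)"
    using lin_diff[OF fin, of F_word] eq by (simp add: pi_map_eq_lin)
  ultimately have "supp ?z = {}"
    by (rule supp_eq_empty_if_pi_map_eq_0)
  then show "x = y"
    by (auto simp: supp_def fun_eq_iff)
qed

lemma diff_in_pi_map_image:
  assumes "y \<in> pi_map ` MPR_lsd" "y' \<in> pi_map ` MPR_lsd"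
  shows "(\<lambda>v. y v - y' v) \<in> pi_map ` MPR_lsd"
proof -
  obtain x x' where x: "x \<in> MPR_lsd" "y = pi_map x" and x': "x' \<in> MPR_lsd" "y' = pi_map x'"
    using assms by blast
  have sub: "supp (\<lambda>w. x w - x' w) \<subseteq> supp x \<union> supp x'"
    by (auto simp: supp_def)
  moreover have "finite (supp x \<union> supp x')"
    using x(1) x'(1) by (simp add: finite_supp_if_MPR_lsd)
  ultimately have "(\<lambda>w. x w - x' w) \<in> MPR_lsd"
    using x(1) x'(1) finite_subset[OF sub] unfolding MPR_lsd_def by auto
  moreover have "pi_map (\<lambda>w. x w - x' w) = (\<lambda>v. y v - y' v)"
    using lin_diff[OF finite_supp_if_MPR_lsd[OF x(1)] finite_supp_if_MPR_lsd[OF x'(1)]] x x'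
    by (simp add: pi_map_eq_lin)
  ultimately show ?thesis
    by (metis imageI)
qed

lemma pi_map_lin:
  "finite (supp k) \<Longrightarrow> (\<And>i. i \<in> supp k \<Longrightarrow> finite (supp (Y i)))
    \<Longrightarrow> pi_map (lin Y k) = lin (\<lambda>i. pi_map (Y i)) k"
  unfolding pi_map_eq_lin by (rule lin_lin)

lemma lin_in_pi_map_image:
  assumes "finite (supp k)" "\<And>i. i \<in> supp k \<Longrightarrow> X i \<in> pi_map ` MPR_lsd"
  shows "lin X k \<in> pi_map ` MPR_lsd"
proof -
  have "\<exists>x\<in>MPR_lsd. pi_map x = X i" if "i \<in> supp k" for i
    using assms(2)[OF that] by (auto elim!: imageE)
  then obtain Y where Y: "\<forall>i\<in>supp k. Y i \<in> MPR_lsd \<and> pi_map (Y i) = X i"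
    by metis
  have "pi_map (lin Y k) = lin (\<lambda>i. pi_map (Y i)) k"
    using assms(1) Y finite_supp_if_MPR_lsd by (intro pi_map_lin) auto
  also have "\<dots> = lin X k"
    using Y by (intro lin_cong) auto
  moreover have "lin Y k \<in> MPR_lsd"
    using lin_in_MPR_lsd[OF assms(1)] Y by blast
  ultimately show ?thesis
    by (metis imageI)
qed

text \<open>For the lsd word w with descent set psums c, F_w is delta c plus the sum of delta b over the
  compositions b strictly refining c, which have fewer missing cut points.\<close>
lemma delta_in_pi_map_image: "composition c \<Longrightarrow> delta c \<in> pi_map ` MPR_lsd"
proof (induction "card ({1..<sum_list c} - psums c)" arbitrary: c rule: less_induct)
  case less
  let ?n = "sum_list c"
  have psums_c: "psums c \<subseteq> {1..<?n}"
    using psums_composition_bounds[OF less.prems] by fastforce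
  obtain w where w: "lsd w" "length w = ?n" "desc w = psums c"
    using exists_lsd[OF psums_c] by blast
  define R where "R = {b. composition b \<and> sum_list b = ?n \<and> psums c \<subseteq> psums b \<and> b \<noteq> c}"
  define ind_R where "ind_R b = (if b \<in> R then 1 else 0 :: int)" for b
  have "finite R"
    by (rule finite_subset[OF _ finite_compositions[of ?n]]) (auto simp: R_def)
  moreover have "supp ind_R = R"
    by (auto simp: supp_def ind_R_def)
  ultimately have supp_R: "supp ind_R = R" "finite R"
    by auto
  have "delta b \<in> pi_map ` MPR_lsd" if b: "b \<in> R" for b
  proof (rule less.hyps)
    have "psums b \<subseteq> {1..<?n}"
      using psums_composition_bounds[of b] b by (fastforce simp: R_def)
    moreover have "psums c \<subset> psums b"
      using composition_eqI_psums[of b c] b less.prems by (auto simp: R_def)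
    ultimately have "{1..<?n} - psums b \<subset> {1..<?n} - psums c"
      using psums_c by blast
    then show "card ({1..<sum_list b} - psums b) < card ({1..<?n} - psums c)"
      using b by (simp add: R_def psubset_card_mono)
  qed (use b R_def in auto)
  then have "lin delta ind_R \<in> pi_map ` MPR_lsd"
    using supp_R by (intro lin_in_pi_map_image) auto
  moreover have "pi_map (delta w) \<in> pi_map ` MPR_lsd"
    using delta_in_MPR_lsd[OF w(1)] by blast
  ultimately have "(\<lambda>v. F_word w v - ind_R v) \<in> pi_map ` MPR_lsd"
    using diff_in_pi_map_image lin_delta_eq[of ind_R] supp_R by simp
  moreover have "(\<lambda>v. F_word w v - ind_R v) = delta c"
    using w less.prems by (auto simp: F_word_def ind_R_def R_def delta_def fun_eq_iff)
  ultimately show ?case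
    by simp
qed

lemma pi_map_image_MPR_lsd: "pi_map ` MPR_lsd = QSymm"
proof
  show "pi_map ` MPR_lsd \<subseteq> QSymm"
    using pi_map_in_QSymm finite_supp_if_MPR_lsd by blast
  show "QSymm \<subseteq> pi_map ` MPR_lsd"
  proof
    fix q assume "q \<in> QSymm"
    then have "finite (supp q)" "\<forall>c\<in>supp q. composition c"
      by (auto simp: QSymm_def)
    then have "lin delta q \<in> pi_map ` MPR_lsd"
      using delta_in_pi_map_image by (intro lin_in_pi_map_image) auto
    then show "q \<in> pi_map ` MPR_lsd"
      using lin_delta_eq[OF \<open>finite (supp q)\<close>] by simp
  qed
qed

lemma bij_betw_pi_map: "bij_betw pi_map MPR_lsd QSymm"
  using inj_on_pi_map pi_map_image_MPR_lsd by (simp add: bij_betw_def)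

section \<open>The inverse of pi\<close>

abbreviation pi_inv :: "(nat list \<Rightarrow> int) \<Rightarrow> nat list \<Rightarrow> int" where
  "pi_inv \<equiv> the_inv_into MPR_lsd pi_map"

lemma pi_inv_in_MPR_lsd: "q \<in> QSymm \<Longrightarrow> pi_inv q \<in> MPR_lsd"
  using the_inv_into_into[OF inj_on_pi_map] pi_map_image_MPR_lsd by blast

lemma pi_map_pi_inv: "q \<in> QSymm \<Longrightarrow> pi_map (pi_inv q) = q"
  using f_the_inv_into_f[OF inj_on_pi_map] pi_map_image_MPR_lsd by blast

lemma pi_inv_pi_map: "x \<in> MPR_lsd \<Longrightarrow> pi_inv (pi_map x) = x"
  using the_inv_into_f_f[OF inj_on_pi_map] by blast

lemma pi_inv_F_word: "lsd w \<Longrightarrow> pi_inv (F_word w) = delta w"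
  using pi_inv_pi_map[OF delta_in_MPR_lsd] by simp

lemma delta_in_QSymm: "composition c \<Longrightarrow> delta c \<in> QSymm"
  by (simp add: QSymm_def)

lemma add_in_QSymm: "q \<in> QSymm \<Longrightarrow> q' \<in> QSymm \<Longrightarrow> (\<lambda>w. q w + q' w) \<in> QSymm"
proof -
  assume q: "q \<in> QSymm" "q' \<in> QSymm"
  have sub: "supp (\<lambda>w. q w + q' w) \<subseteq> supp q \<union> supp q'"
    by (auto simp: supp_def)
  moreover have "finite (supp q \<union> supp q')"
    using q by (simp add: QSymm_def)
  ultimately show ?thesis
    using q finite_subset[OF sub] unfolding QSymm_def by auto
qed

lemma pi_inv_eq_lin:
  assumes q: "q \<in> QSymm"
  shows "pi_inv q = lin (\<lambda>c. pi_inv (delta c)) q"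
proof -
  have fin: "finite (supp q)" and comp: "\<forall>c\<in>supp q. composition c"
    using q by (auto simp: QSymm_def)
  have "pi_map (lin (\<lambda>c. pi_inv (delta c)) q) = lin (\<lambda>c. pi_map (pi_inv (delta c))) q"
    using fin comp delta_in_QSymm pi_inv_in_MPR_lsd finite_supp_if_MPR_lsd
    by (intro pi_map_lin) auto
  also have "\<dots> = q"
    using comp delta_in_QSymm pi_map_pi_inv lin_delta_eq[OF fin] by (simp cong: lin_cong)
  finally have "pi_inv q = pi_inv (pi_map (lin (\<lambda>c. pi_inv (delta c)) q))"
    by simp
  also have "\<dots> = lin (\<lambda>c. pi_inv (delta c)) q"
    using fin comp delta_in_QSymm pi_inv_in_MPR_lsd by (intro pi_inv_pi_map lin_in_MPR_lsd) auto
  finally show ?thesis .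
qed

lemma pi_inv_add:
  assumes "q \<in> QSymm" "q' \<in> QSymm"
  shows "pi_inv (\<lambda>w. q w + q' w) = (\<lambda>w. pi_inv q w + pi_inv q' w)"
  using pi_inv_eq_lin[OF add_in_QSymm[OF assms]] pi_inv_eq_lin[OF assms(1)]
    pi_inv_eq_lin[OF assms(2)] lin_add[of q q'] assms
  by (simp add: QSymm_def)

lemma counit_pi_inv: "q \<in> QSymm \<Longrightarrow> counit (pi_inv q) = counit q"
  using counit_pi_map[OF finite_supp_if_MPR_lsd[OF pi_inv_in_MPR_lsd]] pi_map_pi_inv by metis

lemma comult_pi_inv:
  assumes q: "q \<in> QSymm"
  shows "mu_MPR (pi_inv q) = tensor_map pi_inv pi_inv (mu_Q q)"
proof -
  let ?x = "pi_inv q"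
  let ?t = "mu_MPR ?x"
  have x: "?x \<in> MPR_lsd" "finite (supp ?x)"
    using pi_inv_in_MPR_lsd[OF q] finite_supp_if_MPR_lsd by auto
  have t: "finite (supp ?t)"
    unfolding mu_MPR_def using x(2) finite_supp_mu_MPR_basis by (rule finite_supp_lin)
  have lsd_t: "lsd a \<and> lsd b" if "(a, b) \<in> supp ?t" for a b
    using lsd_if_comult_MPR_lsd[OF x(1)] that by (simp add: supp_def)
  have "tensor_map pi_inv pi_inv (mu_Q q) = tensor_map pi_inv pi_inv (tensor_map pi_map pi_map ?t)"
    using comult_pi_map[OF x(2)] pi_map_pi_inv[OF q] by simp
  also have "\<dots> = tensor_map (\<lambda>y. pi_inv (pi_map y)) (\<lambda>y. pi_inv (pi_map y)) ?t"
    using t finite_supp_F_word pi_inv_eq_lin[OF F_word_in_QSymm]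
    by (intro tensor_map_tensor_map) auto
  also have "\<dots> = tensor_map (\<lambda>y. y) (\<lambda>y. y) ?t"
    using lsd_t pi_inv_F_word by (intro tensor_map_cong) auto
  also have "\<dots> = ?t"
    using t by (rule tensor_map_id)
  finally show ?thesis ..
qed

lemma coalg_morphism_pi_inv: "coalg_morphism QSymm mu_Q mu_MPR pi_inv"
  unfolding coalg_morphism_def using pi_inv_add comult_pi_inv counit_pi_inv by blast

theorem theorem14p4:
  shows "MPR_lsd \<subseteq> MPR
    \<and> (\<forall>x\<in>MPR_lsd. \<forall>u v. mu_MPR x (u, v) \<noteq> 0 \<longrightarrow> lsd u \<and> lsd v)
    \<and> bij_betw pi_map MPR_lsd QSymm
    \<and> coalg_morphism MPR_lsd mu_MPR mu_Q pi_map
    \<and> (let psi = the_inv_into MPR_lsd pi_map in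
         (\<forall>q\<in>QSymm. psi q \<in> MPR_lsd \<and> pi_map (psi q) = q)
         \<and> coalg_morphism QSymm mu_Q mu_MPR psi)"
  using MPR_lsd_subset_MPR lsd_if_comult_MPR_lsd bij_betw_pi_map coalg_morphism_pi_map
    pi_inv_in_MPR_lsd pi_map_pi_inv coalg_morphism_pi_inv
  by (simp add: Let_def)

end
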